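(* Let $(Y,\preceq,\prec,\to)$ be a solid vector space, let $b\in Y$ with $b\succ0$, and let $\|\cdot\|\colon Y\to\mathbb R$ be the Minkowski functional of $[-b,b]$. Then: (i) $\|\cdot\|$ is a monotone norm on $Y$ and $\|x\|=\min\{\lambda\ge0: -\lambda b\preceq x\preceq\lambda b\}$ for all $x\in Y$; (ii) for $x\in Y$ and $\varepsilon>0$, $\|x\|<\varepsilon$ if and only if $-\varepsilon b\prec x\prec\varepsilon b$.
   Context: Vector space with convergence: a real vector space $Y$ with a relation $\to$ between sequences in $Y$ and points of $Y$ (uniqueness of limits not assumed) such that (C1) $x_n\to x$, $y_n\to y$ imply $x_n+y_n\to x+y$; (C2) $x_n\to x$, $\lambda\in\mathbb R$ imply $\lambda x_n\to\lambda x$; (C3) $\lambda_n\to\lambda$ in $\mathbb R$ imply $\lambda_n x\to\lambda x$. $A\subseteq Y$ is open if $x_n\to x\in A$ implies $x_n\in A$ for all but finitely many $n$; closed if $x_n\to x$, $x_n\in A$ $\forall n$ imply $x\in A$; $A^\circ$ is the union of all open subsets of $A$. A cone is a nonempty closed $K$ with $\lambda K\subseteq K$ ($\lambda\ge0$), $K+K\subseteq K$, $K\cap(-K)=\{0\}$; solid if $K\ne\{0\}$, $K^\circ\ne\emptyset$. A vector ordering is a partial order $\preceq$ with (V1) $x\preceq y\Rightarrow x+z\preceq y+z$; (V2) $\lambda\ge0$, $x\preceq y\Rightarrow\lambda x\preceq\lambda y$; (V3) $x_n\to x$, $y_n\to y$, $x_n\preceq y_n$ $\forall n\Rightarrow x\preceq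 y$. Solid vector space: positive cone $K=\{x:x\succeq0\}$ solid, with $x\prec y$ iff $y-x\in K^\circ$. $[a,b]=\{x:a\preceq x\preceq b\}$. Minkowski functional of $A$: $\|x\|=\inf\{\lambda\ge0: x\in\lambda A\}$. A norm is monotone if $\|x\|\le\|y\|$ whenever $0\preceq x\preceq y$. *)

theory Defs
  imports "HOL-Analysis.Analysis"
begin

definition conv_space :: "((nat \<Rightarrow> 'a::real_vector) \<Rightarrow> 'a \<Rightarrow> bool) \<Rightarrow> bool" where
  "conv_space conv \<longleftrightarrow>
     (\<forall>xs ys x y. conv xs x \<longrightarrow> conv ys y \<longrightarrow> conv (\<lambda>n. xs n + ys n) (x + y)) \<and>
     (\<forall>xs x (c::real). conv xs x \<longrightarrow> conv (\<lambda>n. c *\<^sub>R xs n) (c *\<^sub>R x)) \<and>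
     (\<forall>(ls::nat \<Rightarrow> real) l x. ls \<longlonglongrightarrow> l \<longrightarrow> conv (\<lambda>n. ls n *\<^sub>R x) (l *\<^sub>R x))"

definition c_open :: "((nat \<Rightarrow> 'a) \<Rightarrow> 'a \<Rightarrow> bool) \<Rightarrow> 'a set \<Rightarrow> bool" where
  "c_open conv A \<longleftrightarrow> (\<forall>xs x. conv xs x \<longrightarrow> x \<in> A \<longrightarrow> (\<forall>\<^sub>F n in sequentially. xs n \<in> A))"

definition c_closed :: "((nat \<Rightarrow> 'a) \<Rightarrow> 'a \<Rightarrow> bool) \<Rightarrow> 'a set \<Rightarrow> bool" where
  "c_closed conv A \<longleftrightarrow> (\<forall>xs x. conv xs x \<longrightarrow> (\<forall>n. xs n \<in> A) \<longrightarrow> x \<in> A)"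

definition c_interior :: "((nat \<Rightarrow> 'a) \<Rightarrow> 'a \<Rightarrow> bool) \<Rightarrow> 'a set \<Rightarrow> 'a set" where
  "c_interior conv A = \<Union>{U. U \<subseteq> A \<and> c_open conv U}"

definition is_cone :: "((nat \<Rightarrow> 'a::real_vector) \<Rightarrow> 'a \<Rightarrow> bool) \<Rightarrow> 'a set \<Rightarrow> bool" where
  "is_cone conv K \<longleftrightarrow> K \<noteq> {} \<and> c_closed conv K \<and>
     (\<forall>(c::real) x. c \<ge> 0 \<longrightarrow> x \<in> K \<longrightarrow> c *\<^sub>R x \<in> K) \<and>
     (\<forall>x y. x \<in> K \<longrightarrow> y \<in> K \<longrightarrow> x + y \<in> K) \<and>
     K \<inter> uminus ` K = {0}"

definition solid_cone :: "((nat \<Rightarrow> 'a::real_vector) \<Rightarrow> 'a \<Rightarrow> bool) \<Rightarrow> 'a set \<Rightarrow> bool" where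
  "solid_cone conv K \<longleftrightarrow> is_cone conv K \<and> K \<noteq> {0} \<and> c_interior conv K \<noteq> {}"

definition vector_ordering ::
  "((nat \<Rightarrow> 'a::real_vector) \<Rightarrow> 'a \<Rightarrow> bool) \<Rightarrow> ('a \<Rightarrow> 'a \<Rightarrow> bool) \<Rightarrow> bool" where
  "vector_ordering conv le \<longleftrightarrow>
     (\<forall>x. le x x) \<and> (\<forall>x y z. le x y \<longrightarrow> le y z \<longrightarrow> le x z) \<and>
     (\<forall>x y. le x y \<longrightarrow> le y x \<longrightarrow> x = y) \<and>
     (\<forall>x y z. le x y \<longrightarrow> le (x + z) (y + z)) \<and>
     (\<forall>(c::real) x y. c \<ge> 0 \<longrightarrow> le x y \<longrightarrow> le (c *\<^sub>R x) (c *\<^sub>R y)) \<and>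
     (\<forall>xs ys x y. conv xs x \<longrightarrow> conv ys y \<longrightarrow> (\<forall>n. le (xs n) (ys n)) \<longrightarrow> le x y)"

definition pos_cone :: "('a::real_vector \<Rightarrow> 'a \<Rightarrow> bool) \<Rightarrow> 'a set" where
  "pos_cone le = {x. le 0 x}"

definition solid_vector_space ::
  "((nat \<Rightarrow> 'a::real_vector) \<Rightarrow> 'a \<Rightarrow> bool) \<Rightarrow> ('a \<Rightarrow> 'a \<Rightarrow> bool) \<Rightarrow> bool" where
  "solid_vector_space conv le \<longleftrightarrow>
     conv_space conv \<and> vector_ordering conv le \<and> solid_cone conv (pos_cone le)"

definition strict_le ::
  "((nat \<Rightarrow> 'a::real_vector) \<Rightarrow> 'a \<Rightarrow> bool) \<Rightarrow> ('a \<Rightarrow> 'a \<Rightarrow> bool) \<Rightarrow> 'a \<Rightarrow> 'a \<Rightarrow> bool" where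
  "strict_le conv le x y \<longleftrightarrow> y - x \<in> c_interior conv (pos_cone le)"

definition order_interval :: "('a \<Rightarrow> 'a \<Rightarrow> bool) \<Rightarrow> 'a \<Rightarrow> 'a \<Rightarrow> 'a set" where
  "order_interval le a b = {x. le a x \<and> le x b}"

definition minkowski :: "'a::real_vector set \<Rightarrow> 'a \<Rightarrow> real" where
  "minkowski A x = Inf {l. l \<ge> 0 \<and> x \<in> (\<lambda>y. l *\<^sub>R y) ` A}"

definition is_norm :: "('a::real_vector \<Rightarrow> real) \<Rightarrow> bool" where
  "is_norm N \<longleftrightarrow> (\<forall>x. N x \<ge> 0) \<and> (\<forall>x. N x = 0 \<longleftrightarrow> x = 0) \<and>
     (\<forall>(c::real) x. N (c *\<^sub>R x) = \<bar>c\<bar> * N x) \<and> (\<forall>x y. N (x + y) \<le> N x + N y)"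

definition monotone_norm :: "('a::real_vector \<Rightarrow> 'a \<Rightarrow> bool) \<Rightarrow> ('a \<Rightarrow> real) \<Rightarrow> bool" where
  "monotone_norm le N \<longleftrightarrow> (\<forall>x y. le 0 x \<longrightarrow> le x y \<longrightarrow> N x \<le> N y)"

end

theory Submission
  imports Defs
begin

text \<open>The admissible scalars \<open>\<lambda> \<ge> 0\<close> with \<open>-\<lambda>b \<preceq> x \<preceq> \<lambda>b\<close> form an upward closed set. It is
  nonempty because the interior point \<open>b\<close> of the positive cone absorbs every direction, and
  it contains its infimum by (C3) and (V3); so the Minkowski functional is a minimum, and the
  norm axioms and monotonicity follow from the order axioms. For (ii): if \<open>\<parallel>x\<parallel> < \<epsilon>\<close>, then
  \<open>\<epsilon>b \<mp> x\<close> is the interior point \<open>(\<epsilon> - \<parallel>x\<parallel>)b\<close> plus an element of the cone, hence interior;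
  conversely, an interior point \<open>\<epsilon>b \<mp> x\<close> still dominates a small positive multiple of \<open>b\<close>,
  which pushes the bound below \<open>\<epsilon>\<close>.\<close>

lemma c_interiorE:
  assumes "z \<in> c_interior conv A"
  obtains U where "U \<subseteq> A" "c_open conv U" "z \<in> U"
  using assms by (auto simp: c_interior_def)

lemma c_interiorI: "U \<subseteq> A \<Longrightarrow> c_open conv U \<Longrightarrow> z \<in> U \<Longrightarrow> z \<in> c_interior conv A"
  by (auto simp: c_interior_def)

locale convergence_vector_space =
  fixes conv :: "(nat \<Rightarrow> 'a::real_vector) \<Rightarrow> 'a \<Rightarrow> bool"
  assumes conv_space: "conv_space conv"
begin

lemma conv_add: "conv xs x \<Longrightarrow> conv ys y \<Longrightarrow> conv (\<lambda>n. xs n + ys n) (x + y)"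
  using conv_space by (simp add: conv_space_def)

lemma conv_scaleR: "conv xs x \<Longrightarrow> conv (\<lambda>n. c *\<^sub>R xs n) (c *\<^sub>R x)"
  using conv_space by (simp add: conv_space_def)

lemma conv_scaleR_left: "ls \<longlonglongrightarrow> l \<Longrightarrow> conv (\<lambda>n. ls n *\<^sub>R x) (l *\<^sub>R x)"
  using conv_space by (simp add: conv_space_def)

lemma conv_const: "conv (\<lambda>n. x) x"
  using conv_scaleR_left[of "\<lambda>n. 1" 1 x] by simp

lemma c_interior_absorbing:
  assumes "z \<in> c_interior conv A"
  shows "\<exists>t>0. z - t *\<^sub>R w \<in> A"
proof -
  obtain U where U: "U \<subseteq> A" "c_open conv U" "z \<in> U"
    using assms by (rule c_interiorE)
  have "conv (\<lambda>n. z + inverse (real (Suc n)) *\<^sub>R (- w)) (z + 0 *\<^sub>R (- w))"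
    using conv_add[OF conv_const conv_scaleR_left[OF LIMSEQ_inverse_real_of_nat]] .
  then have "\<forall>\<^sub>F n in sequentially. z - inverse (real (Suc n)) *\<^sub>R w \<in> U"
    using U unfolding c_open_def by simp
  then obtain n where "z - inverse (real (Suc n)) *\<^sub>R w \<in> U"
    unfolding eventually_sequentially by blast
  with U(1) show ?thesis
    by (intro exI[of _ "inverse (real (Suc n))"]) auto
qed

lemma c_open_affine_image:
  assumes "c \<noteq> 0" and "c_open conv U"
  shows "c_open conv ((\<lambda>y. c *\<^sub>R y + k) ` U)"
  unfolding c_open_def
proof (intro allI impI)
  fix xs z
  assume "conv xs z" and "z \<in> (\<lambda>y. c *\<^sub>R y + k) ` U"
  then obtain y where y: "y \<in> U" "z = c *\<^sub>R y + k" by blast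
  have "conv (\<lambda>n. inverse c *\<^sub>R (xs n + - k)) (inverse c *\<^sub>R (z + - k))"
    using conv_scaleR[OF conv_add[OF \<open>conv xs z\<close> conv_const]] .
  moreover have "inverse c *\<^sub>R (z + - k) = y"
    using y assms(1) by simp
  ultimately have "\<forall>\<^sub>F n in sequentially. inverse c *\<^sub>R (xs n + - k) \<in> U"
    using assms(2) y(1) unfolding c_open_def by metis
  then show "\<forall>\<^sub>F n in sequentially. xs n \<in> (\<lambda>y. c *\<^sub>R y + k) ` U"
  proof (rule eventually_mono)
    fix n
    assume "inverse c *\<^sub>R (xs n + - k) \<in> U"
    moreover have "xs n = c *\<^sub>R (inverse c *\<^sub>R (xs n + - k)) + k"
      using assms(1) by simp
    ultimately show "xs n \<in> (\<lambda>y. c *\<^sub>R y + k) ` U" by blast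
  qed
qed

end

locale ordered_convergence_space = convergence_vector_space conv
  for conv :: "(nat \<Rightarrow> 'a::real_vector) \<Rightarrow> 'a \<Rightarrow> bool" +
  fixes le :: "'a \<Rightarrow> 'a \<Rightarrow> bool"
  assumes vector_ordering: "vector_ordering conv le"
begin

lemma le_refl: "le x x"
  using vector_ordering by (simp add: vector_ordering_def)

lemma le_trans: "le x y \<Longrightarrow> le y z \<Longrightarrow> le x z"
  using vector_ordering unfolding vector_ordering_def by blast

lemma le_antisym: "le x y \<Longrightarrow> le y x \<Longrightarrow> x = y"
  using vector_ordering unfolding vector_ordering_def by blast

lemma le_add_right: "le x y \<Longrightarrow> le (x + z) (y + z)"
  using vector_ordering unfolding vector_ordering_def by blast

lemma le_scaleR: "0 \<le> c \<Longrightarrow> le x y \<Longrightarrow> le (c *\<^sub>R x) (c *\<^sub>R y)"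
  using vector_ordering unfolding vector_ordering_def by blast

lemma le_limit: "conv xs x \<Longrightarrow> conv ys y \<Longrightarrow> (\<And>n. le (xs n) (ys n)) \<Longrightarrow> le x y"
  using vector_ordering unfolding vector_ordering_def by blast

lemma le_iff_nonneg_diff: "le x y \<longleftrightarrow> le 0 (y - x)"
  using le_add_right[of x y "- x"] le_add_right[of 0 "y - x" x] by auto

lemma le_minus: "le x y \<Longrightarrow> le (- y) (- x)"
  by (simp add: le_iff_nonneg_diff[of x] le_iff_nonneg_diff[of "- y"])

lemma add_le_mono: "le x y \<Longrightarrow> le u v \<Longrightarrow> le (x + u) (y + v)"
  using le_add_right[of x y u] le_add_right[of u v y] by (metis le_trans add.commute)

lemma le_inverse_scaleR: "0 < t \<Longrightarrow> le (t *\<^sub>R x) y \<Longrightarrow> le x (inverse t *\<^sub>R y)"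
  using le_scaleR[of "inverse t" "t *\<^sub>R x" y] by simp

lemma pos_cone_interior_shift:
  assumes "u \<in> c_interior conv (pos_cone le)" and "0 < c" and "le 0 k"
  shows "c *\<^sub>R u + k \<in> c_interior conv (pos_cone le)"
proof -
  obtain U where U: "U \<subseteq> pos_cone le" "c_open conv U" "u \<in> U"
    using assms(1) by (rule c_interiorE)
  have "(\<lambda>y. c *\<^sub>R y + k) ` U \<subseteq> pos_cone le"
    using U(1) le_scaleR[of c 0] add_le_mono[of 0 _ 0 k] assms(2,3)
    by (fastforce simp: pos_cone_def)
  moreover have "c_open conv ((\<lambda>y. c *\<^sub>R y + k) ` U)"
    using assms(2) U(2) by (simp add: c_open_affine_image)
  ultimately show ?thesis
    using U(3) by (blast intro: c_interiorI)
qed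

end

locale order_unit_space = ordered_convergence_space conv le
  for conv :: "(nat \<Rightarrow> 'a::real_vector) \<Rightarrow> 'a \<Rightarrow> bool" and le +
  fixes b :: 'a
  assumes unit_strictly_positive: "strict_le conv le 0 b"
begin

lemma unit_interior: "b \<in> c_interior conv (pos_cone le)"
  using unit_strictly_positive by (simp add: strict_le_def)

lemma unit_nonneg: "le 0 b"
  using unit_interior by (auto simp: pos_cone_def elim: c_interiorE)

lemma le_scaleR_unit: "l \<le> l' \<Longrightarrow> le (l *\<^sub>R b) (l' *\<^sub>R b)"
  using le_scaleR[of "l' - l" 0 b] unit_nonneg
  by (simp add: le_iff_nonneg_diff[of "l *\<^sub>R b"] algebra_simps)

definition unit_bounds :: "'a \<Rightarrow> real set" where
  "unit_bounds x = {l. 0 \<le> l \<and> le (- (l *\<^sub>R b)) x \<and> le x (l *\<^sub>R b)}"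

abbreviation unit_norm :: "'a \<Rightarrow> real" where
  "unit_norm \<equiv> minkowski (order_interval le (- b) b)"

lemma unit_bounds_eq:
  "unit_bounds x = {l. 0 \<le> l \<and> x \<in> (\<lambda>y. l *\<^sub>R y) ` order_interval le (- b) b}"
proof (intro set_eqI iffI)
  fix l
  assume "l \<in> {l. 0 \<le> l \<and> x \<in> (\<lambda>y. l *\<^sub>R y) ` order_interval le (- b) b}"
  then obtain y where "0 \<le> l" "le (- b) y" "le y b" "x = l *\<^sub>R y"
    by (auto simp: order_interval_def)
  then show "l \<in> unit_bounds x"
    using le_scaleR[of l "- b" y] le_scaleR[of l y b] by (auto simp: unit_bounds_def)
next
  fix l
  assume l: "l \<in> unit_bounds x"
  show "l \<in> {l. 0 \<le> l \<and> x \<in> (\<lambda>y. l *\<^sub>R y) ` order_interval le (- b) b}"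
  proof (cases "l = 0")
    case True
    then have "x = 0"
      using l le_antisym by (auto simp: unit_bounds_def)
    moreover have "0 \<in> order_interval le (- b) b"
      using unit_nonneg le_minus[OF unit_nonneg] by (simp add: order_interval_def)
    ultimately show ?thesis
      using True by force
  next
    case False
    with l have "0 < l" "le (- (l *\<^sub>R b)) x" "le x (l *\<^sub>R b)"
      by (auto simp: unit_bounds_def)
    then have "inverse l *\<^sub>R x \<in> order_interval le (- b) b"
      using le_scaleR[of "inverse l" "- (l *\<^sub>R b)" x] le_scaleR[of "inverse l" x "l *\<^sub>R b"]
      by (simp add: order_interval_def)
    moreover have "x = l *\<^sub>R (inverse l *\<^sub>R x)"
      using \<open>0 < l\<close> by simp
    ultimately show ?thesis
      using \<open>0 < l\<close> by (auto intro: rev_image_eqI)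
  qed
qed

lemma unit_norm_eq_Inf: "unit_norm x = Inf (unit_bounds x)"
  by (simp add: minkowski_def unit_bounds_eq)

lemma unit_bounds_upward_closed: "l \<in> unit_bounds x \<Longrightarrow> l \<le> l' \<Longrightarrow> l' \<in> unit_bounds x"
  using le_trans[OF _ le_scaleR_unit] le_trans[OF le_minus[OF le_scaleR_unit]]
  by (fastforce simp: unit_bounds_def)

lemma unit_boundsI:
  assumes "le (- (l *\<^sub>R b)) x" and "le x (l' *\<^sub>R b)"
  shows "max (max l l') 0 \<in> unit_bounds x"
  using le_trans[OF le_minus[OF le_scaleR_unit] assms(1)] le_trans[OF assms(2) le_scaleR_unit]
  by (simp add: unit_bounds_def)

lemma unit_bounds_nonempty: "unit_bounds x \<noteq> {}"
proof -
  obtain t where "0 < t" "le (t *\<^sub>R x) b"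
    using c_interior_absorbing[OF unit_interior, of x] le_iff_nonneg_diff
    unfolding pos_cone_def by blast
  then have upper: "le x (inverse t *\<^sub>R b)"
    by (rule le_inverse_scaleR)
  obtain s where "0 < s" "le (s *\<^sub>R (- x)) b"
    using c_interior_absorbing[OF unit_interior, of "- x"] le_iff_nonneg_diff
    unfolding pos_cone_def by blast
  then have "le (- x) (inverse s *\<^sub>R b)"
    by (rule le_inverse_scaleR)
  then have "le (- (inverse s *\<^sub>R b)) x"
    using le_minus by fastforce
  with upper show ?thesis
    using unit_boundsI by blast
qed

lemma unit_bounds_closed:
  assumes "ls \<longlonglongrightarrow> l" and "\<And>n. ls n \<in> unit_bounds x" and "0 \<le> l"
  shows "l \<in> unit_bounds x"
proof -
  have "le x (l *\<^sub>R b)"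
    using le_limit[OF conv_const conv_scaleR_left[OF assms(1)]] assms(2)
    by (simp add: unit_bounds_def)
  moreover have "le (- (l *\<^sub>R b)) x"
    using le_limit[OF conv_scaleR_left[OF assms(1), of "- b"] conv_const, of x] assms(2)
    by (simp add: unit_bounds_def)
  ultimately show ?thesis
    using assms(3) by (simp add: unit_bounds_def)
qed

lemma unit_norm_mem_unit_bounds: "unit_norm x \<in> unit_bounds x"
proof -
  let ?m = "Inf (unit_bounds x)"
  have bdd: "bdd_below (unit_bounds x)"
    by (rule bdd_belowI[of _ 0]) (simp add: unit_bounds_def)
  have "0 \<le> ?m"
    using unit_bounds_nonempty by (intro cInf_greatest) (auto simp: unit_bounds_def)
  moreover have "?m + inverse (real (Suc n)) \<in> unit_bounds x" for n
  proof -
    have "?m < ?m + inverse (real (Suc n))"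
      by simp
    then obtain l where "l \<in> unit_bounds x" "l < ?m + inverse (real (Suc n))"
      using cInf_less_iff[OF unit_bounds_nonempty bdd] by blast
    then show ?thesis
      using unit_bounds_upward_closed by simp
  qed
  moreover have "(\<lambda>n. ?m + inverse (real (Suc n))) \<longlonglongrightarrow> ?m + 0"
    by (intro tendsto_intros LIMSEQ_inverse_real_of_nat)
  ultimately show ?thesis
    using unit_bounds_closed unit_norm_eq_Inf by simp
qed

lemma unit_norm_le: "l \<in> unit_bounds x \<Longrightarrow> unit_norm x \<le> l"
  unfolding unit_norm_eq_Inf by (rule cInf_lower) (auto intro: bdd_belowI[of _ 0] simp: unit_bounds_def)

lemma unit_norm_nonneg: "0 \<le> unit_norm x"
  and unit_norm_lower: "le (- (unit_norm x *\<^sub>R b)) x"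
  and unit_norm_upper: "le x (unit_norm x *\<^sub>R b)"
  using unit_norm_mem_unit_bounds[of x] by (auto simp: unit_bounds_def)

lemma unit_norm_scaleR_le: "unit_norm (c *\<^sub>R x) \<le> \<bar>c\<bar> * unit_norm x"
proof (rule unit_norm_le)
  let ?m = "unit_norm x"
  have bounds: "le (- (?m *\<^sub>R b)) x" "le x (?m *\<^sub>R b)"
    by (rule unit_norm_lower, rule unit_norm_upper)
  show "\<bar>c\<bar> * ?m \<in> unit_bounds (c *\<^sub>R x)"
  proof (cases "0 \<le> c")
    case True
    then show ?thesis
      using le_scaleR[OF True bounds(1)] le_scaleR[OF True bounds(2)] unit_norm_nonneg
      by (simp add: unit_bounds_def)
  next
    case False
    then have nonneg: "0 \<le> - c" by simp
    have "le ((- c) *\<^sub>R (- (?m *\<^sub>R b))) ((- c) *\<^sub>R (- x))"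
      by (rule le_scaleR[OF nonneg le_minus[OF bounds(2)]])
    moreover have "le ((- c) *\<^sub>R (- x)) ((- c) *\<^sub>R (?m *\<^sub>R b))"
      by (rule le_scaleR[OF nonneg]) (use le_minus[OF bounds(1)] in simp)
    moreover have "(- c) *\<^sub>R (- (?m *\<^sub>R b)) = - ((\<bar>c\<bar> * ?m) *\<^sub>R b)"
      and "(- c) *\<^sub>R (- x) = c *\<^sub>R x"
      and "(- c) *\<^sub>R (?m *\<^sub>R b) = (\<bar>c\<bar> * ?m) *\<^sub>R b"
      using False by auto
    ultimately show ?thesis
      using unit_norm_nonneg unfolding unit_bounds_def by simp
  qed
qed

lemma unit_norm_scaleR: "unit_norm (c *\<^sub>R x) = \<bar>c\<bar> * unit_norm x"
proof (cases "c = 0")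
  case True
  have "unit_norm 0 \<le> 0"
    by (rule unit_norm_le) (simp add: unit_bounds_def le_refl)
  with True show ?thesis
    using unit_norm_nonneg[of 0] by simp
next
  case False
  have "unit_norm x = unit_norm (inverse c *\<^sub>R (c *\<^sub>R x))"
    using False by simp
  also have "\<dots> \<le> \<bar>inverse c\<bar> * unit_norm (c *\<^sub>R x)"
    by (rule unit_norm_scaleR_le)
  finally have "\<bar>c\<bar> * unit_norm x \<le> unit_norm (c *\<^sub>R x)"
    using False by (simp add: field_simps)
  with unit_norm_scaleR_le[of c x] show ?thesis by simp
qed

lemma unit_norm_eq_0_iff: "unit_norm x = 0 \<longleftrightarrow> x = 0"
proof
  assume "unit_norm x = 0"
  then show "x = 0"
    using unit_norm_lower[of x] unit_norm_upper[of x] le_antisym by simp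
qed (use unit_norm_scaleR[of 0 x] in simp)

lemma unit_norm_triangle: "unit_norm (x + y) \<le> unit_norm x + unit_norm y"
proof (rule unit_norm_le)
  have "le (- (unit_norm x *\<^sub>R b) + - (unit_norm y *\<^sub>R b)) (x + y)"
    and "le (x + y) (unit_norm x *\<^sub>R b + unit_norm y *\<^sub>R b)"
    using add_le_mono unit_norm_lower unit_norm_upper by blast+
  then show "unit_norm x + unit_norm y \<in> unit_bounds (x + y)"
    using unit_norm_nonneg[of x] unit_norm_nonneg[of y]
    by (simp add: unit_bounds_def scaleR_add_left)
qed

lemma unit_norm_mono: "le 0 x \<Longrightarrow> le x y \<Longrightarrow> unit_norm x \<le> unit_norm y"
proof (rule unit_norm_le)
  assume "le 0 x" "le x y"
  have "le (- (unit_norm y *\<^sub>R b)) 0"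
    using le_minus[OF le_scaleR[OF unit_norm_nonneg unit_nonneg]] by simp
  then show "unit_norm y \<in> unit_bounds x"
    using le_trans[OF _ \<open>le 0 x\<close>] le_trans[OF \<open>le x y\<close> unit_norm_upper] unit_norm_nonneg
    by (simp add: unit_bounds_def)
qed

lemma unit_norm_less_iff:
  assumes "0 < e"
  shows "unit_norm x < e \<longleftrightarrow> strict_le conv le (- (e *\<^sub>R b)) x \<and> strict_le conv le x (e *\<^sub>R b)"
proof
  assume less: "unit_norm x < e"
  have "le 0 (unit_norm x *\<^sub>R b - x)" and "le 0 (x - - (unit_norm x *\<^sub>R b))"
    using unit_norm_upper[of x] unit_norm_lower[of x] le_iff_nonneg_diff by blast+
  then have "(e - unit_norm x) *\<^sub>R b + (unit_norm x *\<^sub>R b - x) \<in> c_interior conv (pos_cone le)"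
    and "(e - unit_norm x) *\<^sub>R b + (x - - (unit_norm x *\<^sub>R b)) \<in> c_interior conv (pos_cone le)"
    using less pos_cone_interior_shift[OF unit_interior] by simp_all
  then show "strict_le conv le (- (e *\<^sub>R b)) x \<and> strict_le conv le x (e *\<^sub>R b)"
    by (simp add: strict_le_def algebra_simps)
next
  assume "strict_le conv le (- (e *\<^sub>R b)) x \<and> strict_le conv le x (e *\<^sub>R b)"
  then have "x - - (e *\<^sub>R b) \<in> c_interior conv (pos_cone le)"
    and "e *\<^sub>R b - x \<in> c_interior conv (pos_cone le)"
    by (simp_all add: strict_le_def)
  then obtain s t where "0 < s" "le 0 (x - - (e *\<^sub>R b) - s *\<^sub>R b)"
    and "0 < t" "le 0 (e *\<^sub>R b - x - t *\<^sub>R b)"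
    using c_interior_absorbing[of _ _ b] unfolding pos_cone_def by blast
  moreover have "x - - (e *\<^sub>R b) - s *\<^sub>R b = x - - ((e - s) *\<^sub>R b)"
    and "e *\<^sub>R b - x - t *\<^sub>R b = (e - t) *\<^sub>R b - x"
    by (simp_all add: algebra_simps)
  ultimately have "le (- ((e - s) *\<^sub>R b)) x" and "le x ((e - t) *\<^sub>R b)"
    using le_iff_nonneg_diff by metis+
  then have "unit_norm x \<le> max (max (e - s) (e - t)) 0"
    by (intro unit_norm_le unit_boundsI)
  also have "\<dots> < e"
    using \<open>0 < s\<close> \<open>0 < t\<close> assms by simp
  finally show "unit_norm x < e" .
qed

end

theorem lemma7p6:
  fixes conv :: "(nat \<Rightarrow> 'a::real_vector) \<Rightarrow> 'a \<Rightarrow> bool"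
    and le :: "'a \<Rightarrow> 'a \<Rightarrow> bool"
    and b :: 'a
  assumes "solid_vector_space conv le"
    and "strict_le conv le 0 b"
  shows "is_norm (minkowski (order_interval le (- b) b)) \<and>
         monotone_norm le (minkowski (order_interval le (- b) b)) \<and>
         (\<forall>x. minkowski (order_interval le (- b) b) x \<ge> 0 \<and>
              le (- (minkowski (order_interval le (- b) b) x *\<^sub>R b)) x \<and>
              le x (minkowski (order_interval le (- b) b) x *\<^sub>R b) \<and>
              (\<forall>l. l \<ge> 0 \<longrightarrow> le (- (l *\<^sub>R b)) x \<longrightarrow> le x (l *\<^sub>R b) \<longrightarrow>
                   minkowski (order_interval le (- b) b) x \<le> l)) \<and>
         (\<forall>x (e::real). e > 0 \<longrightarrow>
            (minkowski (order_interval le (- b) b) x < e \<longleftrightarrow>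
             strict_le conv le (- (e *\<^sub>R b)) x \<and> strict_le conv le x (e *\<^sub>R b)))"
proof -
  interpret order_unit_space conv le b
    using assms by unfold_locales (simp_all add: solid_vector_space_def)
  have "is_norm unit_norm"
    unfolding is_norm_def
    using unit_norm_nonneg unit_norm_eq_0_iff unit_norm_scaleR unit_norm_triangle by blast
  moreover have "monotone_norm le unit_norm"
    unfolding monotone_norm_def using unit_norm_mono by blast
  ultimately show ?thesis
    using unit_norm_nonneg unit_norm_lower unit_norm_upper unit_norm_le unit_norm_less_iff
    by (simp add: unit_bounds_def)
qed

end
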